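(* Let $g\in G=\mathrm{PSL}(2,\mathbb{C})^q\times\mathrm{PSL}(2,\mathbb{R})^r$ be elliptic of infinite order and $h\in G$ loxodromic. Then there are positive integers $m,n$ such that $g^mh^n$ and $h^ng^m$ are loxodromic.
   Context: An element $g=(g_1,\dots,g_{q+r})\in G$ is elliptic (resp. loxodromic) if every component $g_i$ is an elliptic (resp. loxodromic) element of $\mathrm{PSL}(2,\mathbb{C})$. *)

theory Defs
  imports "HOL-Analysis.Analysis"
begin

(* Elements of PSL(2,C) are represented by lifts in SL(2,C), i.e. 2x2 complex
   matrices of determinant 1; A and -A represent the same element.  All notions
   below are invariant under A \<mapsto> -A and compatible with products/powers. *)

type_synonym cmat = "complex^2^2"

definition SL2C :: "cmat set" where
  "SL2C = {A. det A = 1}"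

(* lifts of PSL(2,R): real determinant-one matrices *)
definition SL2R :: "cmat set" where
  "SL2R = {A. det A = 1 \<and> (\<forall>i j. Im (A $ i $ j) = 0)}"

fun mpow :: "cmat \<Rightarrow> nat \<Rightarrow> cmat" where
  "mpow A 0 = mat 1"
| "mpow A (Suc k) = A ** mpow A k"

definition elliptic :: "cmat \<Rightarrow> bool" where
  "elliptic A \<longleftrightarrow> Im (trace A) = 0 \<and> \<bar>Re (trace A)\<bar> < 2"

(* loxodromic element of PSL(2,C): trace^2 \<notin> [0,4] *)
definition loxodromic :: "cmat \<Rightarrow> bool" where
  "loxodromic A \<longleftrightarrow> \<not> (Im (trace A) = 0 \<and> \<bar>Re (trace A)\<bar> \<le> 2)"

(* G = PSL(2,C)^q \<times> PSL(2,R)^r, elements as index functions on {0..<q+r} *)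
definition inG :: "nat \<Rightarrow> nat \<Rightarrow> (nat \<Rightarrow> cmat) \<Rightarrow> bool" where
  "inG q r g \<longleftrightarrow> (\<forall>i<q. g i \<in> SL2C) \<and> (\<forall>i. q \<le> i \<and> i < q + r \<longrightarrow> g i \<in> SL2R)"

definition G_mult :: "(nat \<Rightarrow> cmat) \<Rightarrow> (nat \<Rightarrow> cmat) \<Rightarrow> (nat \<Rightarrow> cmat)" where
  "G_mult g h = (\<lambda>i. g i ** h i)"

definition G_pow :: "(nat \<Rightarrow> cmat) \<Rightarrow> nat \<Rightarrow> (nat \<Rightarrow> cmat)" where
  "G_pow g k = (\<lambda>i. mpow (g i) k)"

definition G_elliptic :: "nat \<Rightarrow> nat \<Rightarrow> (nat \<Rightarrow> cmat) \<Rightarrow> bool" where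
  "G_elliptic q r g \<longleftrightarrow> (\<forall>i<q+r. elliptic (g i))"

definition G_loxodromic :: "nat \<Rightarrow> nat \<Rightarrow> (nat \<Rightarrow> cmat) \<Rightarrow> bool" where
  "G_loxodromic q r g \<longleftrightarrow> (\<forall>i<q+r. loxodromic (g i))"

definition G_infinite_order :: "nat \<Rightarrow> nat \<Rightarrow> (nat \<Rightarrow> cmat) \<Rightarrow> bool" where
  "G_infinite_order q r g \<longleftrightarrow>
     (\<forall>k>0. \<exists>i<q+r. mpow (g i) k \<noteq> mat 1 \<and> mpow (g i) k \<noteq> - mat 1)"

end

theory Submission imports Defs begin

(* Everything reduces to one component, i.e. to matrices A (elliptic) and H
   (loxodromic) of determinant 1.  For such matrices the powers satisfy the Chebyshev-type
   recurrence  X(n+2) = tr A * X(n+1) - X(n)  (Cayley-Hamilton), hence so does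
   tr (A^m H^n)  in n.  Writing  tr H = w + 1/w  with |w| > 1, one gets
     tr (A^m H^n) = alpha(m) w^n + beta(m) w^-n,
   so  A^m H^n  is loxodromic for all large n as soon as  alpha(m) != 0, i.e. as soon as
   the "defect"  tr (A^m H) - tr (A^m)/w  does not vanish.  The defect again satisfies the
   recurrence in m, with characteristic roots on the unit circle since A is elliptic; it
   does not vanish at m with A^m = +-I, and two zeros force a power of A to be +-I.  Hence
   for each component some k > 0 makes all multiples of k good.  The theorem follows by
   taking m the product of these k over all components and n large for all of them. *)

section \<open>The Chebyshev recurrence\<close>

definition chebyshev_rec :: "complex \<Rightarrow> (nat \<Rightarrow> complex) \<Rightarrow> bool" where
  "chebyshev_rec t x \<longleftrightarrow> (\<forall>n. x (Suc (Suc n)) = t * x (Suc n) - x n)"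

lemma chebyshev_rec_diff:
  assumes "chebyshev_rec t x" and "chebyshev_rec t y"
  shows "chebyshev_rec t (\<lambda>n. x n - c * y n)"
proof -
  have "x (Suc (Suc n)) - c * y (Suc (Suc n)) = t * (x (Suc n) - c * y (Suc n)) - (x n - c * y n)"
    for n
  proof -
    have "x (Suc (Suc n)) = t * x (Suc n) - x n" "y (Suc (Suc n)) = t * y (Suc n) - y n"
      using assms unfolding chebyshev_rec_def by blast+
    then show ?thesis by (simp only:) (simp add: algebra_simps)
  qed
  then show ?thesis unfolding chebyshev_rec_def by blast
qed

lemma chebyshev_rec_closed_form:
  fixes x :: "nat \<Rightarrow> complex"
  assumes w: "w \<noteq> 0" "w^2 \<noteq> 1" and rec: "chebyshev_rec (w + 1/w) x"
  shows "x n = ((x 1 - x 0 / w) / (w - 1/w)) * w^n + ((w * x 0 - x 1) / (w - 1/w)) * (1/w)^n"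
proof -
  have wd: "w - 1/w \<noteq> 0" using w by (auto simp: field_simps power2_eq_square)
  define \<alpha> where "\<alpha> = (x 1 - x 0 / w) / (w - 1/w)"
  define \<beta> where "\<beta> = (w * x 0 - x 1) / (w - 1/w)"
  define z where "z = 1/w"
  define f where "f n = \<alpha> * w^n + \<beta> * z^n" for n
  have f_rec: "f (Suc (Suc n)) = (w + z) * f (Suc n) - f n" for n
  proof -
    have "(w + z) * f (Suc n) = f (Suc (Suc n)) + (w * z) * f n"
      unfolding f_def power_Suc by (simp add: algebra_simps)
    moreover have "w * z = 1" unfolding z_def using w by simp
    ultimately show ?thesis by simp
  qed
  have "x n = f n \<and> x (Suc n) = f (Suc n)"
  proof (induction n)
    case 0
    have "\<alpha> + \<beta> = x 0 * (w - 1/w) / (w - 1/w)"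
      unfolding \<alpha>_def \<beta>_def by (simp add: add_divide_distrib[symmetric] algebra_simps)
    moreover have "(x 1 - x 0 / w) * w + (w * x 0 - x 1) / w = x 1 * (w - 1/w)"
      using w by (simp add: field_simps)
    moreover have "\<alpha> * w + \<beta> / w = ((x 1 - x 0 / w) * w + (w * x 0 - x 1) / w) / (w - 1/w)"
      unfolding \<alpha>_def \<beta>_def by (simp add: add_divide_distrib)
    ultimately show ?case using wd unfolding f_def z_def by simp
  next
    case (Suc n)
    then show ?case using rec f_rec unfolding chebyshev_rec_def z_def by simp
  qed
  then show ?thesis unfolding f_def z_def \<alpha>_def \<beta>_def by simp
qed

lemma chebyshev_rec_period:
  assumes w: "w \<noteq> 0" "w^2 \<noteq> 1" and rec: "chebyshev_rec (w + 1/w) x"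
    and c: "(w^d)^2 = 1"
  shows "x d = w^d * x 0"
proof -
  define P where "P = (x 1 - x 0 / w) / (w - 1/w)"
  define Q where "Q = (w * x 0 - x 1) / (w - 1/w)"
  have sol: "x n = P * w^n + Q * (1/w)^n" for n
    unfolding P_def Q_def by (rule chebyshev_rec_closed_form[OF w rec])
  have "w^d = 1 \<or> w^d = -1" using c by (simp add: power2_eq_1_iff)
  then have "(1/w)^d = w^d" by (auto simp: power_one_over)
  then have "x d = w^d * (P + Q)" using sol[of d] by (simp add: algebra_simps)
  then show ?thesis using sol[of 0] by simp
qed

lemma chebyshev_rec_two_zeros:
  assumes w: "w \<noteq> 0" "w^2 \<noteq> 1" and rec: "chebyshev_rec (w + 1/w) x"
    and x0: "x 0 \<noteq> 0" and zeros: "x m0 = 0" "x m1 = 0" and lt: "m0 < m1"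
  shows "\<exists>d>0. (w^d)^2 = 1"
proof -
  define P where "P = (x 1 - x 0 / w) / (w - 1/w)"
  define Q where "Q = (w * x 0 - x 1) / (w - 1/w)"
  have sol: "x n = P * w^n + Q * (1/w)^n" for n
    unfolding P_def Q_def by (rule chebyshev_rec_closed_form[OF w rec])
  have zero_iff: "P * w^(2*m) + Q = 0" if "x m = 0" for m
  proof -
    have "w^m * (1/w)^m = 1" using w by (simp add: power_mult_distrib[symmetric])
    then have "w^m * x m = P * w^(2*m) + Q"
      unfolding sol by (simp add: algebra_simps power_mult power2_eq_square power_mult_distrib)
    then show ?thesis using that by simp
  qed
  have "P \<noteq> 0" using zero_iff[OF zeros(1)] sol[of 0] x0 by auto
  moreover have "P * w^(2*m1) = P * w^(2*m0)"
    using zero_iff[OF zeros(1)] zero_iff[OF zeros(2)] by (metis add_right_cancel)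
  ultimately have same: "w^(2*m1) = w^(2*m0)" by simp
  define d where "d = m1 - m0"
  have "w^(2*m1) = w^(2*m0) * w^(2*d)"
    unfolding d_def using lt by (simp add: power_add[symmetric] diff_mult_distrib2)
  then have "(w^d)^2 = 1" using same w by (simp add: power_mult[symmetric] mult.commute)
  moreover have "d > 0" using lt unfolding d_def by simp
  ultimately show ?thesis by blast
qed

lemma eventually_large:
  fixes x :: "nat \<Rightarrow> complex"
  assumes w: "1 < cmod w" and \<alpha>: "\<alpha> \<noteq> 0" and x: "\<And>n. x n = \<alpha> * w^n + \<beta> * (1/w)^n"
  shows "eventually (\<lambda>n. 2 < cmod (x n)) sequentially"
proof -
  obtain N where N: "(2 + cmod \<beta>) / cmod \<alpha> < cmod w ^ N"
    using real_arch_pow[OF w] by blast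
  have "2 < cmod (x n)" if "N \<le> n" for n
  proof -
    have "cmod w ^ N \<le> cmod w ^ n" using w that by (simp add: power_increasing)
    then have "cmod \<alpha> * cmod w ^ N \<le> cmod \<alpha> * cmod w ^ n" by (simp add: mult_left_mono)
    moreover have "2 + cmod \<beta> < cmod \<alpha> * cmod w ^ N"
      using N \<alpha> by (simp add: divide_less_eq mult.commute)
    ultimately have main: "2 + cmod \<beta> < cmod (\<alpha> * w^n)" by (simp add: norm_mult norm_power)
    have "(1 / cmod w) ^ n \<le> 1" using w by (intro power_le_one) (auto simp: divide_le_eq)
    then have "cmod (\<beta> * (1/w)^n) \<le> cmod \<beta>"
      by (simp add: norm_mult norm_power norm_divide mult_left_le)
    moreover have "cmod (\<alpha> * w^n) \<le> cmod (x n) + cmod (\<beta> * (1/w)^n)"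
      using x[of n] norm_triangle_ineq4[of "x n" "\<beta> * (1/w)^n"] by (simp add: algebra_simps)
    ultimately show ?thesis using main by linarith
  qed
  then show ?thesis unfolding eventually_sequentially by blast
qed

section \<open>Powers of 2 x 2 matrices of determinant one\<close>

lemma mpow_add: "mpow A (a + b) = mpow A a ** mpow A b"
  by (induction a) (simp_all add: matrix_mul_assoc)

(* Cayley-Hamilton, entrywise: the entries of A^n satisfy the recurrence with t = tr A. *)
lemma chebyshev_rec_mpow_entry:
  assumes "det A = 1"
  shows "chebyshev_rec (trace A) (\<lambda>n. mpow A n $ i $ j)"
  unfolding chebyshev_rec_def
proof
  fix n
  have split: "mpow A (Suc (Suc n)) = (A ** A) ** mpow A n"
    by (simp add: matrix_mul_assoc)
  have "A$1$1 * A$2$2 - A$1$2 * A$2$1 = 1" using assms by (simp add: det_2)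
  then have "\<forall>i j. ((A ** A) ** mpow A n) $ i $ j = trace A * mpow A (Suc n) $ i $ j - mpow A n $ i $ j"
    unfolding forall_2 by (simp add: matrix_matrix_mult_def sum_2 trace_def; algebra)
  then show "mpow A (Suc (Suc n)) $ i $ j = trace A * mpow A (Suc n) $ i $ j - mpow A n $ i $ j"
    unfolding split by blast
qed

(* By linearity the same holds for tr (A^n B), for any fixed matrix B. *)
lemma chebyshev_rec_trace_mpow:
  assumes "det A = 1"
  shows "chebyshev_rec (trace A) (\<lambda>n. trace (mpow A n ** B))"
proof -
  have entry: "mpow A (Suc (Suc n)) $ i $ j = trace A * mpow A (Suc n) $ i $ j - mpow A n $ i $ j"
    for n i j using chebyshev_rec_mpow_entry[OF assms] unfolding chebyshev_rec_def by blast
  show ?thesis unfolding chebyshev_rec_def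
    by (simp add: trace_def matrix_matrix_mult_def sum_2 entry algebra_simps del: mpow.simps)
qed

lemma neg_mat1_mult: "(- mat 1 :: cmat) ** X = - X"
  by (simp add: vec_eq_iff matrix_matrix_mult_def sum_2 mat_def forall_2)

lemma mpow_pm_mult:
  assumes "mpow A k = mat 1 \<or> mpow A k = - mat 1"
  shows "mpow A (k*c) = mat 1 \<or> mpow A (k*c) = - mat 1"
proof (induction c)
  case (Suc c)
  have "mpow A (k * Suc c) = mpow A k ** mpow A (k*c)"
    by (metis mpow_add mult_Suc_right)
  then show ?case using Suc assms by (auto simp: neg_mat1_mult)
qed simp

section \<open>Eigenvalues of elliptic and loxodromic elements\<close>

lemma eigenvalue_exists: "\<exists>w::complex. w \<noteq> 0 \<and> w + 1/w = t"
proof -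
  define w where "w = (t + csqrt (t^2 - 4)) / 2"
  have "w^2 - t * w + 1 = ((csqrt (t^2 - 4))^2 - t^2 + 4) / 4"
    by (simp add: w_def field_simps power2_eq_square)
  then have e: "w^2 - t * w + 1 = 0" by simp
  then have "w \<noteq> 0" by auto
  moreover have "w + 1/w = t" using e \<open>w \<noteq> 0\<close> by (simp add: field_simps power2_eq_square)
  ultimately show ?thesis by blast
qed

lemma loxodromic_eigenvalue:
  assumes "loxodromic H"
  shows "\<exists>w. 1 < cmod w \<and> w + 1/w = trace H"
proof -
  obtain w where w: "w \<noteq> 0" "w + 1/w = trace H" using eigenvalue_exists by blast
  have "cmod w \<noteq> 1"
  proof
    assume c: "cmod w = 1"
    then have "1/w = cnj w" using w(1) complex_div_cnj[of 1 w] by simp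
    then have "trace H = w + cnj w" using w by simp
    then have "Im (trace H) = 0" "Re (trace H) = 2 * Re w" by (simp_all add: complex_add_cnj)
    moreover have "\<bar>Re w\<bar> \<le> 1" using abs_Re_le_cmod[of w] c by simp
    ultimately show False using assms unfolding loxodromic_def by simp
  qed
  then consider "1 < cmod w" | "1 < cmod (1/w)"
    using w(1) by (fastforce simp: norm_divide field_simps)
  then show ?thesis
  proof cases
    case 2 then show ?thesis using w by (intro exI[of _ "1/w"]) (simp add: add.commute)
  qed (use w in blast)
qed

lemma elliptic_eigenvalue:
  assumes "elliptic A"
  shows "\<exists>w. w \<noteq> 0 \<and> w^2 \<noteq> 1 \<and> w + 1/w = trace A"
proof -
  obtain w where w: "w \<noteq> 0" "w + 1/w = trace A" using eigenvalue_exists by blast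
  have "w^2 \<noteq> 1"
  proof
    assume "w^2 = 1"
    then have "trace A = 2 \<or> trace A = -2" using w by (auto simp: power2_eq_1_iff)
    then show False using assms unfolding elliptic_def by auto
  qed
  then show ?thesis using w by blast
qed

lemma square_ne_one:
  assumes "1 < cmod w"
  shows "w^2 \<noteq> 1"
proof
  assume "w^2 = 1"
  then have "cmod w ^ 2 = 1" by (metis norm_one norm_power)
  then show False using assms by (simp add: power2_eq_1_iff)
qed

lemma loxodromic_if_large_trace:
  assumes "2 < cmod (trace M)"
  shows "loxodromic M"
  unfolding loxodromic_def using assms cmod_eq_Re[of "trace M"] by auto

section \<open>One component\<close>

(* Let x solve the recurrence of an elliptic A and be nonzero whenever A^m = +-I.  Then all
   multiples of a suitable k > 0 avoid the zeros of x: either some A^k = +-I, or x has at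
   most one zero. *)
lemma elliptic_good_multiples:
  assumes dA: "det A = 1" and eA: "elliptic A" and rec: "chebyshev_rec (trace A) x"
    and unit_nonzero: "\<And>m. mpow A m = mat 1 \<or> mpow A m = - mat 1 \<Longrightarrow> x m \<noteq> 0"
  shows "\<exists>k>0. \<forall>c>0. x (k * c) \<noteq> 0"
proof (cases "\<exists>k>0. mpow A k = mat 1 \<or> mpow A k = - mat 1")
  case True
  then show ?thesis using unit_nonzero mpow_pm_mult by blast
next
  case no_unit_power: False
  obtain \<omega> where \<omega>: "\<omega> \<noteq> 0" "\<omega>^2 \<noteq> 1" "\<omega> + 1/\<omega> = trace A"
    using elliptic_eigenvalue[OF eA] by blast
  have rec\<omega>: "chebyshev_rec (\<omega> + 1/\<omega>) x" using rec \<omega>(3) by simp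
  have unit_power: "mpow A d = mat 1 \<or> mpow A d = - mat 1" if "(\<omega>^d)^2 = 1" for d
  proof -
    have "mpow A d $ i $ j = \<omega>^d * mat 1 $ i $ j" for i j
      using chebyshev_rec_period[OF \<omega>(1,2) _ that, of "\<lambda>n. mpow A n $ i $ j"]
        chebyshev_rec_mpow_entry[OF dA, of i j] \<omega>(3) by simp
    moreover have "\<omega>^d = 1 \<or> \<omega>^d = -1" using that by (simp add: power2_eq_1_iff)
    ultimately show ?thesis by (auto simp: vec_eq_iff)
  qed
  have x0: "x 0 \<noteq> 0" using unit_nonzero[of 0] by simp
  have one_zero: "m0 = m1" if zeros: "x m0 = 0" "x m1 = 0" for m0 m1
  proof (rule ccontr)
    assume "m0 \<noteq> m1"
    then consider "m0 < m1" | "m1 < m0" by linarith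
    then obtain d where "d > 0" "(\<omega>^d)^2 = 1"
      using chebyshev_rec_two_zeros[OF \<omega>(1,2) rec\<omega> x0] zeros by metis
    then show False using no_unit_power unit_power by blast
  qed
  show ?thesis
  proof (cases "\<exists>m0. x m0 = 0")
    case True
    then obtain m0 where m0: "x m0 = 0" by blast
    have "x (Suc m0 * c) \<noteq> 0" if "c > 0" for c
    proof
      assume "x (Suc m0 * c) = 0"
      then have "Suc m0 * c = m0" using one_zero m0 by blast
      moreover have "Suc m0 * 1 \<le> Suc m0 * c" using that by (intro mult_le_mono2) simp
      ultimately show False by simp
    qed
    then show ?thesis by blast
  qed (use zero_less_one in blast)
qed

lemma loxodromic_products_eventually:
  assumes dH: "det H = 1" and w: "1 < cmod w" "w + 1/w = trace H"
    and defect: "trace (X ** H) - trace X / w \<noteq> 0"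
  shows "eventually (\<lambda>n. loxodromic (X ** mpow H n) \<and> loxodromic (mpow H n ** X)) sequentially"
proof -
  have w0: "w \<noteq> 0" using w by auto
  have w2: "w^2 \<noteq> 1" using w(1) by (rule square_ne_one)
  define x where "x n = trace (mpow H n ** X)" for n
  have rec: "chebyshev_rec (w + 1/w) x"
    unfolding x_def w(2) by (rule chebyshev_rec_trace_mpow[OF dH])
  have "x 0 = trace X" "x 1 = trace (X ** H)"
    unfolding x_def by (simp_all add: trace_mul_sym[of H X])
  moreover have "w - 1/w \<noteq> 0" using w0 w2 by (auto simp: field_simps power2_eq_square)
  ultimately have "(x 1 - x 0 / w) / (w - 1/w) \<noteq> 0" using defect by simp
  then have "eventually (\<lambda>n. 2 < cmod (x n)) sequentially"
    using eventually_large[OF w(1)] chebyshev_rec_closed_form[OF w0 w2 rec] by blast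
  then show ?thesis
  proof eventually_elim
    case (elim n)
    then have "loxodromic (mpow H n ** X)" unfolding x_def by (rule loxodromic_if_large_trace)
    moreover have "trace (X ** mpow H n) = trace (mpow H n ** X)" by (rule trace_mul_sym)
    ultimately show ?case unfolding loxodromic_def by simp
  qed
qed

lemma component:
  assumes dA: "det A = 1" and dH: "det H = 1" and eA: "elliptic A" and lH: "loxodromic H"
  shows "\<exists>k>0. \<forall>c>0. eventually (\<lambda>n. loxodromic (mpow A (k*c) ** mpow H n) \<and>
                                         loxodromic (mpow H n ** mpow A (k*c))) sequentially"
proof -
  obtain w where w: "1 < cmod w" "w + 1/w = trace H" using loxodromic_eigenvalue[OF lH] by blast
  (* the defect, written with "** mat 1" so that both terms are instances of the trace recurrence *)
  define a where "a m = trace (mpow A m ** H) - (1/w) * trace (mpow A m ** mat 1)" for m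
  have rec: "chebyshev_rec (trace A) a"
    unfolding a_def by (intro chebyshev_rec_diff chebyshev_rec_trace_mpow dA)
  have "a m \<noteq> 0" if "mpow A m = mat 1 \<or> mpow A m = - mat 1" for m
  proof -
    have "w \<noteq> 0" "w * w \<noteq> 1" using w(1) square_ne_one[OF w(1)] by (auto simp: power2_eq_square)
    then have "w - 1/w \<noteq> 0" by (auto simp: field_simps)
    moreover have "trace H - 2 / w = w - 1/w" using w(2) by (simp add: algebra_simps)
    moreover have "trace (- X) = - trace X" for X :: cmat by (simp add: trace_def sum_2)
    ultimately show ?thesis using that unfolding a_def
      by (auto simp: neg_mat1_mult trace_I)
  qed
  then obtain k where "k > 0" "\<forall>c>0. a (k * c) \<noteq> 0"
    using elliptic_good_multiples[OF dA eA rec] by blast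
  moreover have "a m = trace (mpow A m ** H) - trace (mpow A m) / w" for m
    unfolding a_def by simp
  ultimately show ?thesis using loxodromic_products_eventually[OF dH w] by auto
qed

(* Finitely many properties, each holding along all multiples of some k_i > 0, hold
   simultaneously at m = prod k_i. *)
lemma common_good_multiple:
  fixes P :: "'a \<Rightarrow> nat \<Rightarrow> bool"
  assumes "finite I" and "\<And>i. i \<in> I \<Longrightarrow> \<exists>k>0. \<forall>c>0. P i (k * c)"
  shows "\<exists>m>0. \<forall>i\<in>I. P i m"
proof -
  define k where "k i = (SOME k. k > 0 \<and> (\<forall>c>0. P i (k * c)))" for i
  have k: "k i > 0 \<and> (\<forall>c>0. P i (k i * c))" if "i \<in> I" for i
    unfolding k_def using assms(2)[OF that] by (rule someI_ex)
  define m where "m = (\<Prod>i\<in>I. k i)"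
  have m_pos: "m > 0" unfolding m_def using k by (simp add: prod_pos)
  have "P i m" if i: "i \<in> I" for i
  proof -
    have "k i dvd m" unfolding m_def using i by (rule dvd_prodI[OF assms(1)])
    then obtain c where c: "m = k i * c" by (rule dvdE)
    then have "c > 0" using m_pos by (simp add: gr0I)
    then show ?thesis using k i c by simp
  qed
  then show ?thesis using m_pos by blast
qed

lemma inG_det: "inG q r g \<Longrightarrow> i < q + r \<Longrightarrow> det (g i) = 1"
  unfolding inG_def SL2C_def SL2R_def by (cases "i < q") auto

theorem lemmaL:
  fixes q r :: nat and g h :: "nat \<Rightarrow> cmat"
  assumes "inG q r g" and "inG q r h"
    and "G_elliptic q r g" and "G_infinite_order q r g"
    and "G_loxodromic q r h"
  shows "\<exists>m n. m > 0 \<and> n > 0 \<and>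
           G_loxodromic q r (G_mult (G_pow g m) (G_pow h n)) \<and>
           G_loxodromic q r (G_mult (G_pow h n) (G_pow g m))"
proof -
  let ?good = "\<lambda>i m n. loxodromic (mpow (g i) m ** mpow (h i) n) \<and> loxodromic (mpow (h i) n ** mpow (g i) m)"
  have good_multiples: "\<exists>k>0. \<forall>c>0. eventually (?good i (k*c)) sequentially" if i: "i < q + r" for i
  proof -
    have "elliptic (g i)" "loxodromic (h i)"
      using assms(3,5) i unfolding G_elliptic_def G_loxodromic_def by simp_all
    then show ?thesis by (rule component[OF inG_det[OF assms(1) i] inG_det[OF assms(2) i]])
  qed
  have "\<exists>m>0. \<forall>i\<in>{..<q+r}. eventually (?good i m) sequentially"
    by (rule common_good_multiple) (simp_all add: good_multiples)
  then obtain m where m: "m > 0" "\<forall>i\<in>{..<q+r}. eventually (?good i m) sequentially"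
    by blast
  have "eventually (\<lambda>n. \<forall>i\<in>{..<q+r}. ?good i m n) sequentially"
    by (rule eventually_ball_finite[OF finite_lessThan m(2)])
  then have "eventually (\<lambda>n. n > 0 \<and> (\<forall>i\<in>{..<q+r}. ?good i m n)) sequentially"
    by (rule eventually_conj[OF eventually_gt_at_top[of 0]])
  then obtain n where n: "n > 0" "\<forall>i\<in>{..<q+r}. ?good i m n"
    unfolding eventually_sequentially by blast
  have "G_loxodromic q r (G_mult (G_pow g m) (G_pow h n))"
    "G_loxodromic q r (G_mult (G_pow h n) (G_pow g m))"
    using n(2) unfolding G_loxodromic_def G_mult_def G_pow_def by simp_all
  then show ?thesis using m(1) n(1) by blast
qed

end
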